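(* Let $(l,k,b)$ be a suspension triplet for $(X_A,\sigma_A)$. For every $(x,r)\in X^{\mathbb R}_{A,b}$ with $r\ge l(x)$ there exists $(z,s)\in X_A\times\mathbb R$ with $b(z)\le s<l(z)$ such that $(x,r)\sim_{l,k}(z,s)$.
   Context: Let $N>1$ and $A$ an irreducible $N\times N$ $\{0,1\}$-matrix which is not a permutation matrix. $X_A$ is the compact space of sequences $(x_n)_{n\in\mathbb N}$, $x_n\in\{1,\dots,N\}$, $A(x_n,x_{n+1})=1$, with $\sigma_A((x_n)_n)=(x_{n+1})_n$. $\mathbb Z_+$, $\mathbb R_+$ are nonnegative integers/reals. $H^A$ is the quotient of $C(X_A,\mathbb Z)$ by $\{u-u\circ\sigma_A\}$, $H^A_+$ the classes of $\mathbb Z_+$-valued continuous functions; $[f]\in H^A_+$ is an order unit if for every $[u]\in H^A$ some $n\in\mathbb N$ has $n[f]-[u]\in H^A_+$. A suspension triplet is $(l,k,b)$ with $l,k\in C(X_A,\mathbb R_+)$, $b\in C(X_A,\mathbb R)$ such that $c=l-k$ is integer-valued with $[c]$ an order unit, and $l-b$, $k-b\circ\sigma_A$ take values in $\mathbb Z_+$. $X^{\mathbb R}_{A,b}=\{(x,r)\in X_A\times\mathbb R: r\ge b(x)\}$, and $\sim_{l,k}$ is the equivalence relation on it generated by $(x,r)\sim_{l,k}(\sigma_A(x),r-c(x))$ whenever $r\ge l(x)$. *)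

theory Defs
  imports "HOL-Analysis.Analysis"
begin

definition zero_one_matrix :: "nat \<Rightarrow> (nat \<Rightarrow> nat \<Rightarrow> int) \<Rightarrow> bool" where
  "zero_one_matrix N A \<longleftrightarrow> (\<forall>i\<in>{1..N}. \<forall>j\<in>{1..N}. A i j \<in> {0,1})"

definition irreducible_matrix :: "nat \<Rightarrow> (nat \<Rightarrow> nat \<Rightarrow> int) \<Rightarrow> bool" where
  "irreducible_matrix N A \<longleftrightarrow> (\<forall>i\<in>{1..N}. \<forall>j\<in>{1..N}. \<exists>m::nat. \<exists>p::nat \<Rightarrow> nat.
      m \<ge> 1 \<and> p 0 = i \<and> p m = j \<and> (\<forall>t\<le>m. p t \<in> {1..N}) \<and>
      (\<forall>t<m. A (p t) (p (Suc t)) = 1))"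

definition permutation_matrix :: "nat \<Rightarrow> (nat \<Rightarrow> nat \<Rightarrow> int) \<Rightarrow> bool" where
  "permutation_matrix N A \<longleftrightarrow>
     (\<forall>i\<in>{1..N}. \<forall>j\<in>{1..N}. A i j \<in> {0,1}) \<and>
     (\<forall>i\<in>{1..N}. card {j\<in>{1..N}. A i j = 1} = 1) \<and>
     (\<forall>j\<in>{1..N}. card {i\<in>{1..N}. A i j = 1} = 1)"

text \<open>The one-sided topological Markov shift (with the product topology of
  nat => nat, i.e. the discrete topology on symbols).\<close>
definition XA :: "nat \<Rightarrow> (nat \<Rightarrow> nat \<Rightarrow> int) \<Rightarrow> (nat \<Rightarrow> nat) set" where
  "XA N A = {x. (\<forall>n. x n \<in> {1..N}) \<and> (\<forall>n. A (x n) (x (Suc n)) = 1)}"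

definition sigmaA :: "(nat \<Rightarrow> nat) \<Rightarrow> (nat \<Rightarrow> nat)" where
  "sigmaA x = (\<lambda>n. x (Suc n))"

text \<open>[f] is an order unit of (H^A, H^A_+), for an integer-valued function f
  (given as real-valued with values in the integers): for every u in C(X_A,Z)
  there is n with n f - u = w + v - v o sigma_A for some w in C(X_A,Z_+) and
  v in C(X_A,Z).\<close>
definition order_unit :: "nat \<Rightarrow> (nat \<Rightarrow> nat \<Rightarrow> int) \<Rightarrow> ((nat \<Rightarrow> nat) \<Rightarrow> real) \<Rightarrow> bool" where
  "order_unit N A f \<longleftrightarrow>
     (\<forall>u :: (nat \<Rightarrow> nat) \<Rightarrow> int. continuous_on (XA N A) u \<longrightarrow>
        (\<exists>n::nat. \<exists>w v :: (nat \<Rightarrow> nat) \<Rightarrow> int.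
            continuous_on (XA N A) w \<and> continuous_on (XA N A) v \<and>
            (\<forall>x\<in>XA N A. w x \<ge> 0) \<and>
            (\<forall>x\<in>XA N A. real n * f x - real_of_int (u x)
                 = real_of_int (w x + v x - v (sigmaA x)))))"

definition suspension_triplet ::
  "nat \<Rightarrow> (nat \<Rightarrow> nat \<Rightarrow> int) \<Rightarrow> ((nat \<Rightarrow> nat) \<Rightarrow> real) \<Rightarrow> ((nat \<Rightarrow> nat) \<Rightarrow> real)
     \<Rightarrow> ((nat \<Rightarrow> nat) \<Rightarrow> real) \<Rightarrow> bool" where
  "suspension_triplet N A l k b \<longleftrightarrow>
     continuous_on (XA N A) l \<and> continuous_on (XA N A) k \<and> continuous_on (XA N A) b \<and>
     (\<forall>x\<in>XA N A. l x \<ge> 0 \<and> k x \<ge> 0) \<and>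
     (\<forall>x\<in>XA N A. l x - k x \<in> \<int>) \<and>
     order_unit N A (\<lambda>x. l x - k x) \<and>
     (\<forall>x\<in>XA N A. l x - b x \<in> \<int> \<and> l x - b x \<ge> 0) \<and>
     (\<forall>x\<in>XA N A. k x - b (sigmaA x) \<in> \<int> \<and> k x - b (sigmaA x) \<ge> 0)"

definition XR :: "nat \<Rightarrow> (nat \<Rightarrow> nat \<Rightarrow> int) \<Rightarrow> ((nat \<Rightarrow> nat) \<Rightarrow> real) \<Rightarrow> ((nat \<Rightarrow> nat) \<times> real) set" where
  "XR N A b = {(x, r). x \<in> XA N A \<and> r \<ge> b x}"

definition susp_step ::
  "nat \<Rightarrow> (nat \<Rightarrow> nat \<Rightarrow> int) \<Rightarrow> ((nat \<Rightarrow> nat) \<Rightarrow> real) \<Rightarrow> ((nat \<Rightarrow> nat) \<Rightarrow> real)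
     \<Rightarrow> ((nat \<Rightarrow> nat) \<Rightarrow> real) \<Rightarrow> ((nat \<Rightarrow> nat) \<times> real) \<Rightarrow> ((nat \<Rightarrow> nat) \<times> real) \<Rightarrow> bool" where
  "susp_step N A l k b p q \<longleftrightarrow>
     p \<in> XR N A b \<and> snd p \<ge> l (fst p) \<and>
     q = (sigmaA (fst p), snd p - (l (fst p) - k (fst p)))"

definition susp_equiv ::
  "nat \<Rightarrow> (nat \<Rightarrow> nat \<Rightarrow> int) \<Rightarrow> ((nat \<Rightarrow> nat) \<Rightarrow> real) \<Rightarrow> ((nat \<Rightarrow> nat) \<Rightarrow> real)
     \<Rightarrow> ((nat \<Rightarrow> nat) \<Rightarrow> real) \<Rightarrow> ((nat \<Rightarrow> nat) \<times> real) \<Rightarrow> ((nat \<Rightarrow> nat) \<times> real) \<Rightarrow> bool" where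
  "susp_equiv N A l k b = (\<lambda>p q. p \<in> XR N A b \<and> q \<in> XR N A b \<and>
     (sup (susp_step N A l k b) (susp_step N A l k b)\<inverse>\<inverse>)\<^sup>*\<^sup>* p q)"

end

theory Submission
  imports Defs
begin

text \<open>Since \<open>[l - k]\<close> is an order unit, \<open>n (l - k) = 1 + w + v - v \<circ> \<sigma>\<^sub>A\<close> for some \<open>n\<close>,
  some \<open>w \<ge> 0\<close> and some continuous, hence bounded, \<open>v\<close>. So the Birkhoff sums of \<open>l - k\<close>
  along the orbit of \<open>x\<close> grow at least linearly, and \<open>(x, r)\<close> can be pushed down by
  successive generating steps \<open>(y, s) \<mapsto> (\<sigma>\<^sub>A y, s - l y + k y)\<close> until the height first
  drops below \<open>l\<close>; every intermediate height stays above \<open>k \<ge> b \<circ> \<sigma>\<^sub>A\<close>.\<close>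

lemma sigmaA_in_XA: "x \<in> XA N A \<Longrightarrow> sigmaA x \<in> XA N A"
  by (simp add: XA_def sigmaA_def)

lemma funpow_sigmaA_in_XA: "x \<in> XA N A \<Longrightarrow> (sigmaA ^^ i) x \<in> XA N A"
  by (induction i) (auto simp: sigmaA_in_XA)

lemma closed_coordinate_eq: "closed {x :: nat \<Rightarrow> nat. x n = i}"
  by (intro closed_Collect_eq continuous_intros) (auto intro: continuous_on_product_coordinates)

lemma closed_XA: "closed (XA N A)"
proof -
  let ?E = "{p \<in> {1..N} \<times> {1..N}. A (fst p) (snd p) = 1}"
  have XA_eq: "XA N A = (\<Inter>n. (\<Union>i\<in>{1..N}. {x. x n = i}) \<inter>
      (\<Union>(i, j)\<in>?E. {x. x n = i} \<inter> {x. x (Suc n) = j}))"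
    by (auto simp: XA_def)
  show ?thesis
    unfolding XA_eq by (intro closed_INT closed_Int closed_UN) (auto intro!: closed_Int closed_coordinate_eq)
qed

lemma compact_XA: "compact (XA N A)"
proof -
  have "compactin (product_topology (\<lambda>_. euclidean) UNIV) (PiE UNIV (\<lambda>_::nat. {1..N}))"
    by (simp add: compactin_PiE finite_imp_compact)
  then have "compact (PiE UNIV (\<lambda>_::nat. {1..N}))"
    by (simp add: euclidean_product_topology)
  moreover have "XA N A = PiE UNIV (\<lambda>_::nat. {1..N}) \<inter> XA N A"
    by (auto simp: XA_def)
  ultimately show ?thesis
    using closed_XA by (metis compact_Int_closed)
qed

lemma continuous_int_function_bounded_on_XA:
  assumes "continuous_on (XA N A) (v :: (nat \<Rightarrow> nat) \<Rightarrow> int)"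
  obtains B where "\<And>y. y \<in> XA N A \<Longrightarrow> \<bar>real_of_int (v y)\<bar> \<le> B"
proof -
  have "continuous_on (XA N A) (\<lambda>y. real_of_int (v y))"
    using assms by (intro continuous_intros)
  then have "bounded ((\<lambda>y. real_of_int (v y)) ` XA N A)"
    by (intro compact_imp_bounded compact_continuous_image compact_XA)
  then show ?thesis
    using that by (auto simp: bounded_iff)
qed

definition birkhoff_sum :: "((nat \<Rightarrow> nat) \<Rightarrow> real) \<Rightarrow> (nat \<Rightarrow> nat) \<Rightarrow> nat \<Rightarrow> real" where
  "birkhoff_sum f x m = (\<Sum>i<m. f ((sigmaA ^^ i) x))"

lemma birkhoff_sum_Suc:
  "birkhoff_sum f x (Suc m) = birkhoff_sum f x m + f ((sigmaA ^^ m) x)"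
  by (simp add: birkhoff_sum_def)

lemma order_unit_coboundary:
  assumes "order_unit N A c"
  obtains n :: nat and w v :: "(nat \<Rightarrow> nat) \<Rightarrow> int"
  where "continuous_on (XA N A) v"
    "\<And>y. y \<in> XA N A \<Longrightarrow> w y \<ge> 0"
    "\<And>y. y \<in> XA N A \<Longrightarrow> real n * c y - 1 = real_of_int (w y + v y - v (sigmaA y))"
  using assms[unfolded order_unit_def, rule_format, OF continuous_on_const[of _ "1 :: int"]]
    that by force

lemma order_unit_birkhoff_sum_lower_bound:
  assumes "order_unit N A c"
  obtains n B where "\<And>x m. x \<in> XA N A \<Longrightarrow> real n * birkhoff_sum c x m \<ge> real m - 2 * B"
proof -
  obtain n w v where v: "continuous_on (XA N A) v"
    and w: "\<And>y. y \<in> XA N A \<Longrightarrow> w y \<ge> 0"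
    and eq: "\<And>y. y \<in> XA N A \<Longrightarrow> real n * c y - 1 = real_of_int (w y + v y - v (sigmaA y))"
    using order_unit_coboundary[OF assms] by metis
  obtain B where B: "\<And>y. y \<in> XA N A \<Longrightarrow> \<bar>real_of_int (v y)\<bar> \<le> B"
    using continuous_int_function_bounded_on_XA[OF v] by metis
  have "real n * birkhoff_sum c x m \<ge> real m - 2 * B" if x: "x \<in> XA N A" for x m
  proof -
    define T where "T i = (sigmaA ^^ i) x" for i
    have T: "T i \<in> XA N A" "T (Suc i) = sigmaA (T i)" for i
      using funpow_sigmaA_in_XA[OF x] by (simp_all add: T_def)
    have "real n * birkhoff_sum c x m - m = (\<Sum>i<m. real n * c (T i) - 1)"
      by (simp add: birkhoff_sum_def T_def sum_distrib_left sum_subtractf)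
    also have "\<dots> = (\<Sum>i<m. real_of_int (w (T i)) - (v (T (Suc i)) - v (T i)))"
      using eq T by (intro sum.cong) auto
    also have "\<dots> = (\<Sum>i<m. real_of_int (w (T i))) + (v (T 0) - v (T m))"
      using sum_lessThan_telescope[of "\<lambda>i. real_of_int (v (T i))" m] by (simp add: sum_subtractf)
    also have "\<dots> \<ge> - 2 * B"
    proof -
      have "(\<Sum>i<m. real_of_int (w (T i))) \<ge> 0"
        using w T by (intro sum_nonneg) auto
      moreover have "\<bar>real_of_int (v (T 0))\<bar> \<le> B" "\<bar>real_of_int (v (T m))\<bar> \<le> B"
        using B T by auto
      ultimately show ?thesis by linarith
    qed
    finally show ?thesis by linarith
  qed
  then show ?thesis using that by blast
qed

lemma order_unit_birkhoff_sum_unbounded: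
  assumes "order_unit N A c" "x \<in> XA N A"
  shows "\<exists>m. birkhoff_sum c x m > r"
proof -
  obtain n B where bound: "\<And>m. real n * birkhoff_sum c x m \<ge> real m - 2 * B"
    using order_unit_birkhoff_sum_lower_bound[OF assms(1)] assms(2) by metis
  define m where "m = nat \<lceil>real n * r + 2 * B\<rceil> + 1"
  have "real n * r + 2 * B \<le> real (nat \<lceil>real n * r + 2 * B\<rceil>)"
    by (rule real_nat_ceiling_ge)
  then have "real n * birkhoff_sum c x m > real n * r"
    using bound[of m] by (simp add: m_def)
  then show ?thesis
    by (cases "n = 0") auto
qed

lemma susp_step_chain:
  assumes ST: "suspension_triplet N A l k b" and xr: "(x, r) \<in> XR N A b"
    and above: "\<And>j. j < m \<Longrightarrow> l ((sigmaA ^^ j) x) \<le> r - birkhoff_sum (\<lambda>y. l y - k y) x j"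
  defines "p \<equiv> ((sigmaA ^^ m) x, r - birkhoff_sum (\<lambda>y. l y - k y) x m)"
  shows "p \<in> XR N A b \<and>
    (sup (susp_step N A l k b) (susp_step N A l k b)\<inverse>\<inverse>)\<^sup>*\<^sup>* (x, r) p"
  using above unfolding p_def
proof (induction m)
  case 0
  then show ?case using xr by (simp add: birkhoff_sum_def)
next
  case (Suc m)
  let ?y = "(sigmaA ^^ m) x" and ?s = "r - birkhoff_sum (\<lambda>y. l y - k y) x m"
  have IH: "(?y, ?s) \<in> XR N A b \<and>
      (sup (susp_step N A l k b) (susp_step N A l k b)\<inverse>\<inverse>)\<^sup>*\<^sup>* (x, r) (?y, ?s)"
    by (rule Suc.IH) (simp add: Suc.prems)
  have y: "?y \<in> XA N A" and high: "l ?y \<le> ?s"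
    using IH Suc.prems[of m] by (auto simp: XR_def)
  have "susp_step N A l k b (?y, ?s) (sigmaA ?y, ?s - (l ?y - k ?y))"
    using IH high by (simp add: susp_step_def)
  then have "(sup (susp_step N A l k b) (susp_step N A l k b)\<inverse>\<inverse>)\<^sup>*\<^sup>* (x, r)
      (sigmaA ?y, ?s - (l ?y - k ?y))"
    using IH by (blast intro: rtranclp.rtrancl_into_rtrancl sup2I1)
  moreover have "(sigmaA ?y, ?s - (l ?y - k ?y)) \<in> XR N A b"
    using ST y high sigmaA_in_XA[OF y] by (auto simp: suspension_triplet_def XR_def)
  moreover have next_point: "((sigmaA ^^ Suc m) x, r - birkhoff_sum (\<lambda>y. l y - k y) x (Suc m)) =
      (sigmaA ?y, ?s - (l ?y - k ?y))"
    by (simp add: birkhoff_sum_Suc)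
  ultimately show ?case
    by (simp only: next_point)
qed

theorem lemma2p3:
  fixes N :: nat and A :: "nat \<Rightarrow> nat \<Rightarrow> int"
    and l k b :: "(nat \<Rightarrow> nat) \<Rightarrow> real" and x :: "nat \<Rightarrow> nat" and r :: real
  assumes "N > 1"
    and "zero_one_matrix N A"
    and "irreducible_matrix N A"
    and "\<not> permutation_matrix N A"
    and "suspension_triplet N A l k b"
    and "(x, r) \<in> XR N A b"
    and "r \<ge> l x"
  shows "\<exists>z s. z \<in> XA N A \<and> b z \<le> s \<and> s < l z \<and> susp_equiv N A l k b (x, r) (z, s)"
proof -
  have x: "x \<in> XA N A" using assms(6) by (simp add: XR_def)
  define R where "R m = r - birkhoff_sum (\<lambda>y. l y - k y) x m" for m
  let ?below = "\<lambda>m. R m < l ((sigmaA ^^ m) x)"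
  obtain m where "birkhoff_sum (\<lambda>y. l y - k y) x m > r"
    using order_unit_birkhoff_sum_unbounded assms(5) x by (metis suspension_triplet_def)
  moreover have "l ((sigmaA ^^ m) x) \<ge> 0"
    using assms(5) funpow_sigmaA_in_XA[OF x] by (simp add: suspension_triplet_def)
  ultimately have "?below m" by (simp add: R_def)
  define m0 where "m0 = (LEAST m. ?below m)"
  have below: "?below m0"
    unfolding m0_def using LeastI \<open>?below m\<close> .
  have "\<And>j. j < m0 \<Longrightarrow> l ((sigmaA ^^ j) x) \<le> R j"
    unfolding m0_def using not_less_Least by (metis not_le)
  then have "((sigmaA ^^ m0) x, R m0) \<in> XR N A b \<and>
      (sup (susp_step N A l k b) (susp_step N A l k b)\<inverse>\<inverse>)\<^sup>*\<^sup>* (x, r) ((sigmaA ^^ m0) x, R m0)"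
    using susp_step_chain[OF assms(5,6)] by (simp add: R_def)
  then show ?thesis
    using below assms(6) by (auto simp: susp_equiv_def XR_def)
qed

end
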